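(* Let $\mathcal S$ and $\mathcal T$ be additive categories and let $T:\mathcal S\to\mathcal T$ be an additive functor admitting a left adjoint $S_\ell$. Then a morphism $g\in\mathcal S(A,B)$ is $\mathrm{add}(\mathrm{im}(S_\ell))$-epic if and only if $T(g)$ is a split epimorphism.
   Context: $\mathrm{add}(\mathrm{im}(S_\ell))$ is the full subcategory of $\mathcal S$ of direct summands of finite direct sums of objects of the form $S_\ell(C)$, $C$ in $\mathcal T$. For a full subcategory $\mathcal X$ of $\mathcal S$, a morphism $g\in\mathcal S(A,B)$ is $\mathcal X$-epic if for every object $X$ of $\mathcal X$ the map $\mathcal S(X,g):\mathcal S(X,A)\to\mathcal S(X,B)$ is surjective. *)

theory Defs
  imports Main
begin

text \<open>Objects of type 'o, morphisms of type 'm; Hom A B is the hom-set;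
  cmp g f is the composite g after f; pls/zer/ngt give the abelian group
  structure on each hom-set.\<close>

record ('o, 'm) addcat =
  Obj :: "'o set"
  Hom :: "'o \<Rightarrow> 'o \<Rightarrow> 'm set"
  cmp :: "'m \<Rightarrow> 'm \<Rightarrow> 'm"
  idm :: "'o \<Rightarrow> 'm"
  pls :: "'m \<Rightarrow> 'm \<Rightarrow> 'm"
  zer :: "'o \<Rightarrow> 'o \<Rightarrow> 'm"
  ngt :: "'m \<Rightarrow> 'm"

definition category :: "('o, 'm, 'x) addcat_scheme \<Rightarrow> bool" where
  "category C \<longleftrightarrow>
     (\<forall>A\<in>Obj C. idm C A \<in> Hom C A A) \<and>
     (\<forall>A\<in>Obj C. \<forall>B\<in>Obj C. \<forall>D\<in>Obj C. \<forall>f\<in>Hom C A B. \<forall>g\<in>Hom C B D.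
        cmp C g f \<in> Hom C A D) \<and>
     (\<forall>A\<in>Obj C. \<forall>B\<in>Obj C. \<forall>f\<in>Hom C A B.
        cmp C (idm C B) f = f \<and> cmp C f (idm C A) = f) \<and>
     (\<forall>A\<in>Obj C. \<forall>B\<in>Obj C. \<forall>D\<in>Obj C. \<forall>E\<in>Obj C.
        \<forall>f\<in>Hom C A B. \<forall>g\<in>Hom C B D. \<forall>h\<in>Hom C D E.
        cmp C h (cmp C g f) = cmp C (cmp C h g) f)"

definition preadditive :: "('o, 'm, 'x) addcat_scheme \<Rightarrow> bool" where
  "preadditive C \<longleftrightarrow> category C \<and>
     (\<forall>A\<in>Obj C. \<forall>B\<in>Obj C.
        zer C A B \<in> Hom C A B \<and>
        (\<forall>f\<in>Hom C A B. \<forall>g\<in>Hom C A B. pls C f g \<in> Hom C A B) \<and>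
        (\<forall>f\<in>Hom C A B. ngt C f \<in> Hom C A B) \<and>
        (\<forall>f\<in>Hom C A B. \<forall>g\<in>Hom C A B. \<forall>h\<in>Hom C A B.
           pls C (pls C f g) h = pls C f (pls C g h)) \<and>
        (\<forall>f\<in>Hom C A B. \<forall>g\<in>Hom C A B. pls C f g = pls C g f) \<and>
        (\<forall>f\<in>Hom C A B. pls C f (zer C A B) = f) \<and>
        (\<forall>f\<in>Hom C A B. pls C f (ngt C f) = zer C A B)) \<and>
     (\<forall>A\<in>Obj C. \<forall>B\<in>Obj C. \<forall>D\<in>Obj C.
        (\<forall>f\<in>Hom C A B. \<forall>f'\<in>Hom C A B. \<forall>g\<in>Hom C B D.
           cmp C g (pls C f f') = pls C (cmp C g f) (cmp C g f')) \<and>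
        (\<forall>f\<in>Hom C A B. \<forall>g\<in>Hom C B D. \<forall>g'\<in>Hom C B D.
           cmp C (pls C g g') f = pls C (cmp C g f) (cmp C g' f)))"

definition additive_category :: "('o, 'm, 'x) addcat_scheme \<Rightarrow> bool" where
  "additive_category C \<longleftrightarrow> preadditive C \<and>
     (\<exists>Z\<in>Obj C. idm C Z = zer C Z Z) \<and>
     (\<forall>A\<in>Obj C. \<forall>B\<in>Obj C. \<exists>Y\<in>Obj C.
        \<exists>i1\<in>Hom C A Y. \<exists>i2\<in>Hom C B Y. \<exists>p1\<in>Hom C Y A. \<exists>p2\<in>Hom C Y B.
          cmp C p1 i1 = idm C A \<and> cmp C p2 i2 = idm C B \<and>
          cmp C p1 i2 = zer C B A \<and> cmp C p2 i1 = zer C A B \<and>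
          pls C (cmp C i1 p1) (cmp C i2 p2) = idm C Y)"

definition is_functor ::
  "('o, 'm, 'x) addcat_scheme \<Rightarrow> ('p, 'n, 'y) addcat_scheme \<Rightarrow>
   ('o \<Rightarrow> 'p) \<Rightarrow> ('m \<Rightarrow> 'n) \<Rightarrow> bool" where
  "is_functor C D Fo Fm \<longleftrightarrow>
     (\<forall>A\<in>Obj C. Fo A \<in> Obj D) \<and>
     (\<forall>A\<in>Obj C. \<forall>B\<in>Obj C. \<forall>f\<in>Hom C A B. Fm f \<in> Hom D (Fo A) (Fo B)) \<and>
     (\<forall>A\<in>Obj C. Fm (idm C A) = idm D (Fo A)) \<and>
     (\<forall>A\<in>Obj C. \<forall>B\<in>Obj C. \<forall>E\<in>Obj C. \<forall>f\<in>Hom C A B. \<forall>g\<in>Hom C B E.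
        Fm (cmp C g f) = cmp D (Fm g) (Fm f))"

definition additive_functor ::
  "('o, 'm, 'x) addcat_scheme \<Rightarrow> ('p, 'n, 'y) addcat_scheme \<Rightarrow>
   ('o \<Rightarrow> 'p) \<Rightarrow> ('m \<Rightarrow> 'n) \<Rightarrow> bool" where
  "additive_functor C D Fo Fm \<longleftrightarrow> is_functor C D Fo Fm \<and>
     (\<forall>A\<in>Obj C. \<forall>B\<in>Obj C. \<forall>f\<in>Hom C A B. \<forall>g\<in>Hom C A B.
        Fm (pls C f g) = pls D (Fm f) (Fm g))"

definition left_adjoint ::
  "('o, 'm, 'x) addcat_scheme \<Rightarrow> ('p, 'n, 'y) addcat_scheme \<Rightarrow>
   ('p \<Rightarrow> 'o) \<Rightarrow> ('n \<Rightarrow> 'm) \<Rightarrow> ('o \<Rightarrow> 'p) \<Rightarrow> ('m \<Rightarrow> 'n) \<Rightarrow> bool" where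
  "left_adjoint C D Lo Lm Ro Rm \<longleftrightarrow>
     is_functor D C Lo Lm \<and> is_functor C D Ro Rm \<and>
     (\<exists>phi :: 'p \<Rightarrow> 'o \<Rightarrow> 'm \<Rightarrow> 'n.
        (\<forall>X\<in>Obj D. \<forall>A\<in>Obj C. bij_betw (phi X A) (Hom C (Lo X) A) (Hom D X (Ro A))) \<and>
        (\<forall>X\<in>Obj D. \<forall>X'\<in>Obj D. \<forall>A\<in>Obj C. \<forall>A'\<in>Obj C.
           \<forall>c\<in>Hom D X' X. \<forall>h\<in>Hom C A A'. \<forall>f\<in>Hom C (Lo X) A.
             phi X' A' (cmp C h (cmp C f (Lm c))) = cmp D (Rm h) (cmp D (phi X A f) c)))"

fun msum :: "('o, 'm, 'x) addcat_scheme \<Rightarrow> 'o \<Rightarrow> 'o \<Rightarrow> (nat \<Rightarrow> 'm) \<Rightarrow> nat \<Rightarrow> 'm" where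
  "msum C A B f 0 = zer C A B"
| "msum C A B f (Suc n) = pls C (msum C A B f n) (f n)"

definition is_direct_sum ::
  "('o, 'm, 'x) addcat_scheme \<Rightarrow> 'o \<Rightarrow> nat \<Rightarrow> (nat \<Rightarrow> 'o) \<Rightarrow> bool" where
  "is_direct_sum C Y n Ys \<longleftrightarrow> Y \<in> Obj C \<and> (\<forall>k<n. Ys k \<in> Obj C) \<and>
     (\<exists>\<iota> \<pi>. (\<forall>k<n. \<iota> k \<in> Hom C (Ys k) Y \<and> \<pi> k \<in> Hom C Y (Ys k)) \<and>
        (\<forall>j<n. \<forall>k<n. cmp C (\<pi> j) (\<iota> k) = (if j = k then idm C (Ys k) else zer C (Ys k) (Ys j))) \<and>
        msum C Y Y (\<lambda>k. cmp C (\<iota> k) (\<pi> k)) n = idm C Y)"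

definition direct_summand :: "('o, 'm, 'x) addcat_scheme \<Rightarrow> 'o \<Rightarrow> 'o \<Rightarrow> bool" where
  "direct_summand C X Y \<longleftrightarrow> X \<in> Obj C \<and> Y \<in> Obj C \<and>
     (\<exists>i\<in>Hom C X Y. \<exists>p\<in>Hom C Y X. cmp C p i = idm C X)"

definition add_im :: "('o, 'm, 'x) addcat_scheme \<Rightarrow> ('p, 'n, 'y) addcat_scheme \<Rightarrow>
   ('p \<Rightarrow> 'o) \<Rightarrow> 'o set" where
  "add_im C D Fo = {X. \<exists>n Cs Y. (\<forall>k<n. Cs k \<in> Obj D) \<and>
       is_direct_sum C Y n (\<lambda>k. Fo (Cs k)) \<and> direct_summand C X Y}"

definition epic_wrt :: "('o, 'm, 'x) addcat_scheme \<Rightarrow> 'o set \<Rightarrow> 'o \<Rightarrow> 'o \<Rightarrow> 'm \<Rightarrow> bool" where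
  "epic_wrt C \<X> A B g \<longleftrightarrow>
     (\<forall>X\<in>\<X>. X \<in> Obj C \<longrightarrow> (\<forall>h\<in>Hom C X B. \<exists>f\<in>Hom C X A. cmp C g f = h))"

definition split_epi :: "('o, 'm, 'x) addcat_scheme \<Rightarrow> 'o \<Rightarrow> 'o \<Rightarrow> 'm \<Rightarrow> bool" where
  "split_epi C A B g \<longleftrightarrow> (\<exists>s\<in>Hom C B A. cmp C g s = idm C B)"

end

theory Submission
  imports Defs
begin

text \<open>Write \<phi> for the adjunction bijection \<open>Hom(S\<^sub>\<ell> X, A) \<cong> Hom(X, T A)\<close>, natural in \<open>A\<close>.
  If \<open>T g\<close> has a section \<open>s\<close>, a map \<open>q : S\<^sub>\<ell> X \<rightarrow> B\<close> lifts along \<open>g\<close> to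
  \<open>\<phi>\<inverse>(s \<circ> \<phi> q)\<close>; and the class of objects along which every map to \<open>B\<close> lifts through \<open>g\<close>
  is closed under finite direct sums and direct summands, so it contains
  \<open>add(im S\<^sub>\<ell>)\<close>. Conversely, lifting the counit \<open>\<epsilon> = \<phi>\<inverse>(id) : S\<^sub>\<ell> T B \<rightarrow> B\<close> to
  \<open>\<epsilon> = g f\<close> gives \<open>T g \<circ> \<phi> f = \<phi> (g f) = id\<close>.\<close>

lemma cat_id_closed: "category C \<Longrightarrow> A \<in> Obj C \<Longrightarrow> idm C A \<in> Hom C A A"
  unfolding category_def by blast

lemma cat_comp_closed:
  "category C \<Longrightarrow> A \<in> Obj C \<Longrightarrow> B \<in> Obj C \<Longrightarrow> D \<in> Obj C \<Longrightarrow>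
   f \<in> Hom C A B \<Longrightarrow> g \<in> Hom C B D \<Longrightarrow> cmp C g f \<in> Hom C A D"
  unfolding category_def by blast

lemma cat_id_left:
  "category C \<Longrightarrow> A \<in> Obj C \<Longrightarrow> B \<in> Obj C \<Longrightarrow> f \<in> Hom C A B \<Longrightarrow> cmp C (idm C B) f = f"
  unfolding category_def by blast

lemma cat_id_right:
  "category C \<Longrightarrow> A \<in> Obj C \<Longrightarrow> B \<in> Obj C \<Longrightarrow> f \<in> Hom C A B \<Longrightarrow> cmp C f (idm C A) = f"
  unfolding category_def by blast

lemma cat_comp_assoc:
  "category C \<Longrightarrow> A \<in> Obj C \<Longrightarrow> B \<in> Obj C \<Longrightarrow> D \<in> Obj C \<Longrightarrow> E \<in> Obj C \<Longrightarrow>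
   f \<in> Hom C A B \<Longrightarrow> g \<in> Hom C B D \<Longrightarrow> h \<in> Hom C D E \<Longrightarrow>
   cmp C h (cmp C g f) = cmp C (cmp C h g) f"
  unfolding category_def by blast

lemma preadditive_category: "preadditive C \<Longrightarrow> category C"
  unfolding preadditive_def by blast

lemma additive_category_preadditive: "additive_category C \<Longrightarrow> preadditive C"
  unfolding additive_category_def by blast

lemma zer_closed: "preadditive C \<Longrightarrow> A \<in> Obj C \<Longrightarrow> B \<in> Obj C \<Longrightarrow> zer C A B \<in> Hom C A B"
  unfolding preadditive_def by blast

lemma pls_closed:
  "preadditive C \<Longrightarrow> A \<in> Obj C \<Longrightarrow> B \<in> Obj C \<Longrightarrow> f \<in> Hom C A B \<Longrightarrow> g \<in> Hom C A B \<Longrightarrow>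
   pls C f g \<in> Hom C A B"
  unfolding preadditive_def by blast

lemma ngt_closed:
  "preadditive C \<Longrightarrow> A \<in> Obj C \<Longrightarrow> B \<in> Obj C \<Longrightarrow> f \<in> Hom C A B \<Longrightarrow> ngt C f \<in> Hom C A B"
  unfolding preadditive_def by blast

lemma pls_assoc:
  "preadditive C \<Longrightarrow> A \<in> Obj C \<Longrightarrow> B \<in> Obj C \<Longrightarrow>
   f \<in> Hom C A B \<Longrightarrow> g \<in> Hom C A B \<Longrightarrow> h \<in> Hom C A B \<Longrightarrow>
   pls C (pls C f g) h = pls C f (pls C g h)"
  unfolding preadditive_def by blast

lemma pls_comm:
  "preadditive C \<Longrightarrow> A \<in> Obj C \<Longrightarrow> B \<in> Obj C \<Longrightarrow> f \<in> Hom C A B \<Longrightarrow> g \<in> Hom C A B \<Longrightarrow>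
   pls C f g = pls C g f"
  unfolding preadditive_def by blast

lemma pls_zer_right:
  "preadditive C \<Longrightarrow> A \<in> Obj C \<Longrightarrow> B \<in> Obj C \<Longrightarrow> f \<in> Hom C A B \<Longrightarrow> pls C f (zer C A B) = f"
  unfolding preadditive_def by blast

lemma pls_ngt_right:
  "preadditive C \<Longrightarrow> A \<in> Obj C \<Longrightarrow> B \<in> Obj C \<Longrightarrow> f \<in> Hom C A B \<Longrightarrow>
   pls C f (ngt C f) = zer C A B"
  unfolding preadditive_def by blast

lemma cmp_pls_distrib_left:
  "preadditive C \<Longrightarrow> A \<in> Obj C \<Longrightarrow> B \<in> Obj C \<Longrightarrow> D \<in> Obj C \<Longrightarrow>
   f \<in> Hom C A B \<Longrightarrow> f' \<in> Hom C A B \<Longrightarrow> g \<in> Hom C B D \<Longrightarrow>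
   cmp C g (pls C f f') = pls C (cmp C g f) (cmp C g f')"
  unfolding preadditive_def by blast

lemma pls_idem_eq_zer:
  assumes P: "preadditive C" and A: "A \<in> Obj C" and B: "B \<in> Obj C" and f: "f \<in> Hom C A B"
    and idem: "pls C f f = f"
  shows "f = zer C A B"
proof -
  have "zer C A B = pls C (pls C f f) (ngt C f)"
    using pls_ngt_right[OF P A B f] idem by simp
  also have "\<dots> = pls C f (pls C f (ngt C f))"
    using pls_assoc[OF P A B f f ngt_closed[OF P A B f]] .
  also have "\<dots> = f"
    using pls_ngt_right[OF P A B f] pls_zer_right[OF P A B f] by simp
  finally show ?thesis by simp
qed

lemma cmp_zer_right:
  assumes P: "preadditive C" and A: "A \<in> Obj C" and B: "B \<in> Obj C" and D: "D \<in> Obj C"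
    and u: "u \<in> Hom C B D"
  shows "cmp C u (zer C A B) = zer C A D"
proof (rule pls_idem_eq_zer[OF P A D])
  have z: "zer C A B \<in> Hom C A B" using zer_closed[OF P A B] .
  show "cmp C u (zer C A B) \<in> Hom C A D"
    using cat_comp_closed[OF preadditive_category[OF P] A B D z u] .
  show "pls C (cmp C u (zer C A B)) (cmp C u (zer C A B)) = cmp C u (zer C A B)"
    using cmp_pls_distrib_left[OF P A B D z z u] pls_zer_right[OF P A B z] by simp
qed

lemma msum_closed:
  assumes P: "preadditive C" and A: "A \<in> Obj C" and B: "B \<in> Obj C"
    and F: "\<And>k. k < n \<Longrightarrow> F k \<in> Hom C A B"
  shows "msum C A B F n \<in> Hom C A B"
  using F by (induction n) (auto intro: zer_closed[OF P A B] pls_closed[OF P A B])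

lemma msum_cong: "(\<And>k. k < n \<Longrightarrow> F k = G k) \<Longrightarrow> msum C A B F n = msum C A B G n"
  by (induction n) auto

lemma cmp_msum_distrib_left:
  assumes P: "preadditive C" and A: "A \<in> Obj C" and B: "B \<in> Obj C" and D: "D \<in> Obj C"
    and u: "u \<in> Hom C B D" and F: "\<And>k. k < n \<Longrightarrow> F k \<in> Hom C A B"
  shows "cmp C u (msum C A B F n) = msum C A D (\<lambda>k. cmp C u (F k)) n"
  using F
proof (induction n)
  case 0
  then show ?case using cmp_zer_right[OF P A B D u] by simp
next
  case (Suc n)
  have F': "\<And>k. k < n \<Longrightarrow> F k \<in> Hom C A B" using Suc.prems by simp
  have "cmp C u (msum C A B F (Suc n)) = pls C (cmp C u (msum C A B F n)) (cmp C u (F n))"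
    using cmp_pls_distrib_left[OF P A B D msum_closed[OF P A B F'] Suc.prems[of n] u] by simp
  then show ?case using Suc.IH[OF F'] by simp
qed

lemma is_direct_sum_single:
  assumes P: "preadditive C" and X: "X \<in> Obj C"
  shows "is_direct_sum C X 1 (\<lambda>_. X)"
proof -
  have C: "category C" using preadditive_category[OF P] .
  have id: "idm C X \<in> Hom C X X" using cat_id_closed[OF C X] .
  have "msum C X X (\<lambda>_. cmp C (idm C X) (idm C X)) 1 = idm C X"
    using cat_id_left[OF C X X id] pls_zer_right[OF P X X id]
      pls_comm[OF P X X id zer_closed[OF P X X]] by simp
  then show ?thesis
    unfolding is_direct_sum_def
    using X id cat_id_left[OF C X X id] by (intro conjI exI[of _ "\<lambda>_. idm C X"]) auto
qed

lemma direct_summand_refl: "category C \<Longrightarrow> X \<in> Obj C \<Longrightarrow> direct_summand C X X"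
  unfolding direct_summand_def using cat_id_closed cat_id_left by metis

lemma image_mem_add_im:
  assumes P: "preadditive C" and Z: "Z \<in> Obj D" and FZ: "Fo Z \<in> Obj C"
  shows "Fo Z \<in> add_im C D Fo"
  unfolding add_im_def
  using Z is_direct_sum_single[OF P FZ] direct_summand_refl[OF preadditive_category[OF P] FZ]
  by (intro CollectI exI[of _ 1] exI[of _ "\<lambda>_. Z"] exI[of _ "Fo Z"]) auto

lemma epic_wrt_subset: "\<Y> \<subseteq> \<X> \<Longrightarrow> epic_wrt C \<X> A B g \<Longrightarrow> epic_wrt C \<Y> A B g"
  unfolding epic_wrt_def by blast

lemma epic_wrt_singleton:
  "epic_wrt C {X} A B g \<longleftrightarrow> (X \<in> Obj C \<longrightarrow> (\<forall>h\<in>Hom C X B. \<exists>f\<in>Hom C X A. cmp C g f = h))"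
  unfolding epic_wrt_def by simp

lemma epic_wrt_direct_sum:
  assumes P: "preadditive C" and A: "A \<in> Obj C" and B: "B \<in> Obj C" and g: "g \<in> Hom C A B"
    and sum: "is_direct_sum C Y n Ys"
    and summands: "\<And>k. k < n \<Longrightarrow> epic_wrt C {Ys k} A B g"
  shows "epic_wrt C {Y} A B g"
  unfolding epic_wrt_singleton
proof (intro impI ballI)
  fix h assume h: "h \<in> Hom C Y B"
  have C: "category C" using preadditive_category[OF P] .
  have Y: "Y \<in> Obj C" and Ys: "\<And>k. k < n \<Longrightarrow> Ys k \<in> Obj C"
    using sum unfolding is_direct_sum_def by auto
  obtain \<iota> \<pi> where \<iota>: "\<And>k. k < n \<Longrightarrow> \<iota> k \<in> Hom C (Ys k) Y"
    and \<pi>: "\<And>k. k < n \<Longrightarrow> \<pi> k \<in> Hom C Y (Ys k)"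
    and id_sum: "msum C Y Y (\<lambda>k. cmp C (\<iota> k) (\<pi> k)) n = idm C Y"
    using sum unfolding is_direct_sum_def by blast
  have "\<forall>k\<in>{..<n}. \<exists>f\<in>Hom C (Ys k) A. cmp C g f = cmp C h (\<iota> k)"
  proof
    fix k assume "k \<in> {..<n}"
    then have k: "k < n" by simp
    show "\<exists>f\<in>Hom C (Ys k) A. cmp C g f = cmp C h (\<iota> k)"
      using summands[OF k] Ys[OF k] cat_comp_closed[OF C Ys[OF k] Y B \<iota>[OF k] h]
      unfolding epic_wrt_singleton by blast
  qed
  then obtain f where f: "\<And>k. k < n \<Longrightarrow> f k \<in> Hom C (Ys k) A"
    and gf: "\<And>k. k < n \<Longrightarrow> cmp C g (f k) = cmp C h (\<iota> k)"
    using bchoice[of "{..<n}"] by (metis lessThan_iff)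
  have f\<pi>: "cmp C (f k) (\<pi> k) \<in> Hom C Y A" if k: "k < n" for k
    using cat_comp_closed[OF C Y Ys[OF k] A \<pi>[OF k] f[OF k]] .
  have \<iota>\<pi>: "cmp C (\<iota> k) (\<pi> k) \<in> Hom C Y Y" if k: "k < n" for k
    using cat_comp_closed[OF C Y Ys[OF k] Y \<pi>[OF k] \<iota>[OF k]] .
  let ?f = "msum C Y A (\<lambda>k. cmp C (f k) (\<pi> k)) n"
  have "cmp C g ?f = msum C Y B (\<lambda>k. cmp C g (cmp C (f k) (\<pi> k))) n"
    using cmp_msum_distrib_left[OF P Y A B g f\<pi>] .
  also have "\<dots> = msum C Y B (\<lambda>k. cmp C h (cmp C (\<iota> k) (\<pi> k))) n"
  proof (rule msum_cong)
    fix k assume k: "k < n"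
    have "cmp C g (cmp C (f k) (\<pi> k)) = cmp C (cmp C g (f k)) (\<pi> k)"
      using cat_comp_assoc[OF C Y Ys[OF k] A B \<pi>[OF k] f[OF k] g] .
    also have "\<dots> = cmp C h (cmp C (\<iota> k) (\<pi> k))"
      using gf[OF k] cat_comp_assoc[OF C Y Ys[OF k] Y B \<pi>[OF k] \<iota>[OF k] h] by simp
    finally show "cmp C g (cmp C (f k) (\<pi> k)) = cmp C h (cmp C (\<iota> k) (\<pi> k))" .
  qed
  also have "\<dots> = cmp C h (msum C Y Y (\<lambda>k. cmp C (\<iota> k) (\<pi> k)) n)"
    using cmp_msum_distrib_left[OF P Y Y B h \<iota>\<pi>] by simp
  also have "\<dots> = h" using id_sum cat_id_right[OF C Y B h] by simp
  finally have "cmp C g ?f = h" .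
  moreover have "?f \<in> Hom C Y A" using msum_closed[OF P Y A f\<pi>] .
  ultimately show "\<exists>f\<in>Hom C Y A. cmp C g f = h" by blast
qed

lemma epic_wrt_direct_summand:
  assumes C: "category C" and A: "A \<in> Obj C" and B: "B \<in> Obj C" and g: "g \<in> Hom C A B"
    and summand: "direct_summand C X Y" and epic: "epic_wrt C {Y} A B g"
  shows "epic_wrt C {X} A B g"
  unfolding epic_wrt_singleton
proof (intro impI ballI)
  fix h assume h: "h \<in> Hom C X B"
  obtain i p where i: "i \<in> Hom C X Y" and p: "p \<in> Hom C Y X" and pi: "cmp C p i = idm C X"
    and X: "X \<in> Obj C" and Y: "Y \<in> Obj C"
    using summand unfolding direct_summand_def by blast
  have hp: "cmp C h p \<in> Hom C Y B" using cat_comp_closed[OF C Y X B p h] .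
  then obtain f where f: "f \<in> Hom C Y A" and gf: "cmp C g f = cmp C h p"
    using epic Y unfolding epic_wrt_singleton by blast
  have "cmp C g (cmp C f i) = cmp C (cmp C h p) i"
    using cat_comp_assoc[OF C X Y A B i f g] gf by simp
  also have "\<dots> = h"
    using cat_comp_assoc[OF C X Y X B i p h] pi cat_id_right[OF C X B h] by simp
  finally show "\<exists>f\<in>Hom C X A. cmp C g f = h"
    using cat_comp_closed[OF C X Y A i f] by blast
qed

lemma epic_wrt_add_im:
  assumes P: "preadditive C" and A: "A \<in> Obj C" and B: "B \<in> Obj C" and g: "g \<in> Hom C A B"
    and image: "\<And>Z. Z \<in> Obj D \<Longrightarrow> epic_wrt C {Fo Z} A B g"
  shows "epic_wrt C (add_im C D Fo) A B g"
proof -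
  have "epic_wrt C {X} A B g" if X: "X \<in> add_im C D Fo" for X
  proof -
    obtain n Zs Y where Zs: "\<And>k. k < n \<Longrightarrow> Zs k \<in> Obj D"
      and sum: "is_direct_sum C Y n (\<lambda>k. Fo (Zs k))" and summand: "direct_summand C X Y"
      using X unfolding add_im_def by blast
    have "epic_wrt C {Y} A B g"
      using epic_wrt_direct_sum[OF P A B g sum] image Zs by blast
    then show ?thesis
      using epic_wrt_direct_summand[OF preadditive_category[OF P] A B g summand] by blast
  qed
  then show ?thesis unfolding epic_wrt_def by blast
qed

lemma functor_obj_closed: "is_functor C D Fo Fm \<Longrightarrow> A \<in> Obj C \<Longrightarrow> Fo A \<in> Obj D"
  unfolding is_functor_def by blast

lemma functor_hom_closed:
  "is_functor C D Fo Fm \<Longrightarrow> A \<in> Obj C \<Longrightarrow> B \<in> Obj C \<Longrightarrow> f \<in> Hom C A B \<Longrightarrow>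
   Fm f \<in> Hom D (Fo A) (Fo B)"
  unfolding is_functor_def by blast

lemma functor_id: "is_functor C D Fo Fm \<Longrightarrow> A \<in> Obj C \<Longrightarrow> Fm (idm C A) = idm D (Fo A)"
  unfolding is_functor_def by blast

lemma left_adjoint_functors:
  "left_adjoint C D Lo Lm Ro Rm \<Longrightarrow> is_functor D C Lo Lm \<and> is_functor C D Ro Rm"
  unfolding left_adjoint_def by blast

lemma left_adjointE:
  assumes adj: "left_adjoint C D Lo Lm Ro Rm" and C: "category C" and D: "category D"
  obtains \<phi> where
    "\<And>X A. X \<in> Obj D \<Longrightarrow> A \<in> Obj C \<Longrightarrow> bij_betw (\<phi> X A) (Hom C (Lo X) A) (Hom D X (Ro A))"
    "\<And>X A A' h f. X \<in> Obj D \<Longrightarrow> A \<in> Obj C \<Longrightarrow> A' \<in> Obj C \<Longrightarrow>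
       h \<in> Hom C A A' \<Longrightarrow> f \<in> Hom C (Lo X) A \<Longrightarrow> \<phi> X A' (cmp C h f) = cmp D (Rm h) (\<phi> X A f)"
proof -
  obtain \<phi> where bij: "\<forall>X\<in>Obj D. \<forall>A\<in>Obj C. bij_betw (\<phi> X A) (Hom C (Lo X) A) (Hom D X (Ro A))"
    and nat: "\<forall>X\<in>Obj D. \<forall>X'\<in>Obj D. \<forall>A\<in>Obj C. \<forall>A'\<in>Obj C.
      \<forall>c\<in>Hom D X' X. \<forall>h\<in>Hom C A A'. \<forall>f\<in>Hom C (Lo X) A.
        \<phi> X' A' (cmp C h (cmp C f (Lm c))) = cmp D (Rm h) (cmp D (\<phi> X A f) c)"
    using adj unfolding left_adjoint_def by blast
  have L: "is_functor D C Lo Lm" and R: "is_functor C D Ro Rm"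
    using left_adjoint_functors[OF adj] by auto
  show thesis
  proof (rule that)
    show "bij_betw (\<phi> X A) (Hom C (Lo X) A) (Hom D X (Ro A))" if "X \<in> Obj D" "A \<in> Obj C" for X A
      using bij that by blast
  next
    fix X A A' h f
    assume X: "X \<in> Obj D" and A: "A \<in> Obj C" and A': "A' \<in> Obj C"
      and h: "h \<in> Hom C A A'" and f: "f \<in> Hom C (Lo X) A"
    have LX: "Lo X \<in> Obj C" using functor_obj_closed[OF L X] .
    have \<phi>f: "\<phi> X A f \<in> Hom D X (Ro A)" using bij X A f bij_betwE by blast
    have "\<phi> X A' (cmp C h (cmp C f (Lm (idm D X)))) = cmp D (Rm h) (cmp D (\<phi> X A f) (idm D X))"
      using nat X A A' h f cat_id_closed[OF D X] by blast
    then show "\<phi> X A' (cmp C h f) = cmp D (Rm h) (\<phi> X A f)"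
      using functor_id[OF L X] cat_id_right[OF C LX A f]
        cat_id_right[OF D X functor_obj_closed[OF R A] \<phi>f] by simp
  qed
qed

lemma left_adjoint_split_epi_imp_epic_wrt_image:
  assumes adj: "left_adjoint C D Lo Lm Ro Rm" and C: "category C" and D: "category D"
    and A: "A \<in> Obj C" and B: "B \<in> Obj C" and g: "g \<in> Hom C A B"
    and split: "split_epi D (Ro A) (Ro B) (Rm g)" and Z: "Z \<in> Obj D"
  shows "epic_wrt C {Lo Z} A B g"
  unfolding epic_wrt_singleton
proof (intro impI ballI)
  fix q assume LZ: "Lo Z \<in> Obj C" and q: "q \<in> Hom C (Lo Z) B"
  obtain \<phi> where bij: "\<And>X A. X \<in> Obj D \<Longrightarrow> A \<in> Obj C \<Longrightarrow>
      bij_betw (\<phi> X A) (Hom C (Lo X) A) (Hom D X (Ro A))"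
    and nat: "\<And>X A A' h f. X \<in> Obj D \<Longrightarrow> A \<in> Obj C \<Longrightarrow> A' \<in> Obj C \<Longrightarrow>
      h \<in> Hom C A A' \<Longrightarrow> f \<in> Hom C (Lo X) A \<Longrightarrow> \<phi> X A' (cmp C h f) = cmp D (Rm h) (\<phi> X A f)"
    using left_adjointE[OF adj C D] by blast
  have R: "is_functor C D Ro Rm" using left_adjoint_functors[OF adj] by blast
  have RA: "Ro A \<in> Obj D" and RB: "Ro B \<in> Obj D"
    using functor_obj_closed[OF R] A B by auto
  obtain s where s: "s \<in> Hom D (Ro B) (Ro A)" and gs: "cmp D (Rm g) s = idm D (Ro B)"
    using split unfolding split_epi_def by blast
  have \<phi>q: "\<phi> Z B q \<in> Hom D Z (Ro B)" using bij[OF Z B] q bij_betwE by blast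
  have "cmp D s (\<phi> Z B q) \<in> Hom D Z (Ro A)" using cat_comp_closed[OF D Z RB RA \<phi>q s] .
  then have "cmp D s (\<phi> Z B q) \<in> \<phi> Z A ` Hom C (Lo Z) A"
    using bij_betw_imp_surj_on[OF bij[OF Z A]] by simp
  then obtain f where f: "f \<in> Hom C (Lo Z) A" and \<phi>f: "\<phi> Z A f = cmp D s (\<phi> Z B q)"
    by (metis imageE)
  have "\<phi> Z B (cmp C g f) = cmp D (Rm g) (cmp D s (\<phi> Z B q))"
    using nat[OF Z A B g f] \<phi>f by simp
  also have "\<dots> = \<phi> Z B q"
    using cat_comp_assoc[OF D Z RB RA RB \<phi>q s functor_hom_closed[OF R A B g]] gs
      cat_id_left[OF D Z RB \<phi>q] by simp
  finally have "cmp C g f = q"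
    using inj_onD[OF bij_betw_imp_inj_on[OF bij[OF Z B]]] cat_comp_closed[OF C LZ A B f g] q
    by blast
  then show "\<exists>f\<in>Hom C (Lo Z) A. cmp C g f = q" using f by blast
qed

lemma left_adjoint_epic_wrt_counit_imp_split_epi:
  assumes adj: "left_adjoint C D Lo Lm Ro Rm" and C: "category C" and D: "category D"
    and A: "A \<in> Obj C" and B: "B \<in> Obj C" and g: "g \<in> Hom C A B"
    and epic: "epic_wrt C {Lo (Ro B)} A B g"
  shows "split_epi D (Ro A) (Ro B) (Rm g)"
proof -
  obtain \<phi> where bij: "\<And>X A. X \<in> Obj D \<Longrightarrow> A \<in> Obj C \<Longrightarrow>
      bij_betw (\<phi> X A) (Hom C (Lo X) A) (Hom D X (Ro A))"
    and nat: "\<And>X A A' h f. X \<in> Obj D \<Longrightarrow> A \<in> Obj C \<Longrightarrow> A' \<in> Obj C \<Longrightarrow>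
      h \<in> Hom C A A' \<Longrightarrow> f \<in> Hom C (Lo X) A \<Longrightarrow> \<phi> X A' (cmp C h f) = cmp D (Rm h) (\<phi> X A f)"
    using left_adjointE[OF adj C D] by blast
  have L: "is_functor D C Lo Lm" and R: "is_functor C D Ro Rm"
    using left_adjoint_functors[OF adj] by auto
  have RB: "Ro B \<in> Obj D" using functor_obj_closed[OF R B] .
  have "idm D (Ro B) \<in> \<phi> (Ro B) B ` Hom C (Lo (Ro B)) B"
    using bij_betw_imp_surj_on[OF bij[OF RB B]] cat_id_closed[OF D RB] by simp
  then obtain \<epsilon> where \<epsilon>: "\<epsilon> \<in> Hom C (Lo (Ro B)) B" and \<phi>\<epsilon>: "\<phi> (Ro B) B \<epsilon> = idm D (Ro B)"
    by (metis imageE)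
  obtain f where f: "f \<in> Hom C (Lo (Ro B)) A" and gf: "cmp C g f = \<epsilon>"
    using epic functor_obj_closed[OF L RB] \<epsilon> unfolding epic_wrt_singleton by blast
  have "cmp D (Rm g) (\<phi> (Ro B) A f) = idm D (Ro B)"
    using nat[OF RB A B g f] gf \<phi>\<epsilon> by simp
  moreover have "\<phi> (Ro B) A f \<in> Hom D (Ro B) (Ro A)" using bij[OF RB A] f bij_betwE by blast
  ultimately show ?thesis unfolding split_epi_def by blast
qed

theorem lemma2p2:
  fixes SC :: "('a, 'b, 'x) addcat_scheme"
    and TC :: "('c, 'd, 'y) addcat_scheme"
    and To :: "'a \<Rightarrow> 'c" and Tm :: "'b \<Rightarrow> 'd"
    and So :: "'c \<Rightarrow> 'a" and Sm :: "'d \<Rightarrow> 'b"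
  assumes "additive_category SC" and "additive_category TC"
    and "additive_functor SC TC To Tm"
    and "left_adjoint SC TC So Sm To Tm"
    and "A \<in> Obj SC" and "B \<in> Obj SC" and "g \<in> Hom SC A B"
  shows "epic_wrt SC (add_im SC TC So) A B g \<longleftrightarrow> split_epi TC (To A) (To B) (Tm g)"
proof -
  have PS: "preadditive SC" and PT: "preadditive TC"
    using assms(1,2) by (simp_all add: additive_category_preadditive)
  have CS: "category SC" and CT: "category TC"
    using PS PT by (simp_all add: preadditive_category)
  have L: "is_functor TC SC So Sm" and R: "is_functor SC TC To Tm"
    using left_adjoint_functors[OF assms(4)] by simp_all
  have TB: "To B \<in> Obj TC" using functor_obj_closed[OF R assms(6)] .
  show ?thesis
  proof
    assume epic: "epic_wrt SC (add_im SC TC So) A B g"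
    have "So (To B) \<in> add_im SC TC So"
      using image_mem_add_im[of SC "To B" TC So] PS TB functor_obj_closed[OF L TB] by blast
    then have "{So (To B)} \<subseteq> add_im SC TC So" by simp
    then have "epic_wrt SC {So (To B)} A B g" using epic by (rule epic_wrt_subset)
    then show "split_epi TC (To A) (To B) (Tm g)"
      by (rule left_adjoint_epic_wrt_counit_imp_split_epi[OF assms(4) CS CT assms(5-7)])
  next
    assume split: "split_epi TC (To A) (To B) (Tm g)"
    have "epic_wrt SC {So Z} A B g" if "Z \<in> Obj TC" for Z
      using left_adjoint_split_epi_imp_epic_wrt_image[OF assms(4) CS CT assms(5-7) split that] .
    then show "epic_wrt SC (add_im SC TC So) A B g"
      by (rule epic_wrt_add_im[OF PS assms(5-7)])
  qed
qed

end
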